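(* Let $R$ be a commutative ring with identity that is not an integral domain. Then $\gamma_t(\Gamma(R)) = 1$ if and only if $Z(R)$ is an annihilator ideal, i.e., $Z(R) = \operatorname{ann}(a)$ for some $a \in R$.
   Context: All rings are commutative with identity. $Z(R)$ is the set of zero-divisors, $Z(R)^*=Z(R)\setminus\{0\}$, and $\operatorname{ann}(a)=\{x\in R: ax=0\}$. The zero-divisor graph $\Gamma(R)$ has vertex set $Z(R)^*$; distinct $r,s$ are adjacent iff $rs=0$, and $x$ is adjacent to itself iff $x^2=0$. A total dominating set is a set $X\subseteq Z(R)^*$ such that every vertex $v$ is adjacent to some $x\in X$ (self-adjacency counts); $\gamma_t(\Gamma(R))$ is the minimum cardinality of a total dominating set. *)

theory Defs
  imports Main "HOL-Library.Extended_Nat"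
begin

definition zero_divisors :: "'a::comm_ring_1 set" where
  "zero_divisors = {x. \<exists>y. y \<noteq> 0 \<and> x * y = 0}"

definition zd_star :: "'a::comm_ring_1 set" where
  "zd_star = zero_divisors - {0}"

definition ann :: "'a::comm_ring_1 \<Rightarrow> 'a set" where
  "ann a = {x. a * x = 0}"

text \<open>Adjacency in the zero-divisor graph (including self-loops when x^2 = 0).\<close>
definition zdg_adj :: "'a::comm_ring_1 \<Rightarrow> 'a \<Rightarrow> bool" where
  "zdg_adj x y \<longleftrightarrow> x \<in> zd_star \<and> y \<in> zd_star \<and> x * y = 0"

definition total_dominating :: "'a::comm_ring_1 set \<Rightarrow> bool" where
  "total_dominating X \<longleftrightarrow> X \<subseteq> zd_star \<and> (\<forall>v\<in>zd_star. \<exists>x\<in>X. zdg_adj v x)"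

definition gamma_t :: "'a::comm_ring_1 itself \<Rightarrow> enat" where
  "gamma_t _ = (INF X \<in> {X :: 'a set. total_dominating X}.
                   (if finite X then enat (card X) else \<infinity>))"

end

theory Submission
  imports Defs
begin

text \<open>A total dominating singleton \<open>{a}\<close> is exactly an element \<open>a\<close> annihilating every
  nonzero zero-divisor; such an \<open>a\<close> has annihilator \<open>Z(R)\<close>. Conversely, if \<open>Z(R) = ann a\<close>
  then \<open>a \<noteq> 0\<close> (as \<open>1 \<notin> Z(R)\<close>) and \<open>a\<close> kills every nonzero zero-divisor, of which there is
  one because \<open>R\<close> is not a domain; so \<open>a\<close> itself is a nonzero zero-divisor and \<open>{a}\<close> totally
  dominates. Since total dominating sets are nonempty, \<open>\<gamma>\<^sub>t = 1\<close> means precisely that a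
  singleton one exists.\<close>

lemma zd_star_nonempty_iff:
  "(zd_star :: 'a::comm_ring_1 set) \<noteq> {} \<longleftrightarrow> (\<exists>a b :: 'a. a \<noteq> 0 \<and> b \<noteq> 0 \<and> a * b = 0)"
  by (auto simp: zd_star_def zero_divisors_def)

lemma one_notin_zero_divisors: "(1::'a::comm_ring_1) \<notin> zero_divisors"
  by (simp add: zero_divisors_def)

lemma total_dominating_singleton_iff:
  "total_dominating {a} \<longleftrightarrow> a \<in> zd_star \<and> (\<forall>v\<in>zd_star. v * a = 0)"
  by (auto simp: total_dominating_def zdg_adj_def)

lemma zero_divisors_eq_ann_if_total_dominating:
  assumes "total_dominating {a}"
  shows "zero_divisors = ann a"
proof (intro set_eqI iffI)
  have a: "a \<in> zd_star" and kills: "\<And>v. v \<in> zd_star \<Longrightarrow> v * a = 0"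
    using assms by (auto simp: total_dominating_singleton_iff)
  fix v
  show "v \<in> ann a" if "v \<in> zero_divisors"
  proof (cases "v = 0")
    case False
    with that have "v * a = 0" by (intro kills) (simp add: zd_star_def)
    then show ?thesis by (simp add: ann_def mult.commute)
  qed (simp add: ann_def)
  show "v \<in> zero_divisors" if "v \<in> ann a"
    using that a by (auto simp: ann_def zd_star_def zero_divisors_def mult.commute)
qed

lemma total_dominating_if_zero_divisors_eq_ann:
  assumes "(zd_star :: 'a::comm_ring_1 set) \<noteq> {}" and Z: "zero_divisors = ann (a :: 'a)"
  shows "total_dominating {a}"
proof -
  have "a \<noteq> 0"
    using Z one_notin_zero_divisors by (force simp: ann_def)
  moreover obtain q :: 'a where "q \<in> zd_star" using assms(1) by blast
  then have "q \<noteq> 0" "a * q = 0" using Z by (auto simp: zd_star_def ann_def)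
  ultimately have "a \<in> zd_star" by (auto simp: zd_star_def zero_divisors_def)
  then show ?thesis
    using Z by (auto simp: total_dominating_singleton_iff zd_star_def ann_def mult.commute)
qed

lemma gamma_t_le_card:
  fixes X :: "'a::comm_ring_1 set"
  assumes "total_dominating X" and "finite X"
  shows "gamma_t TYPE('a) \<le> enat (card X)"
  unfolding gamma_t_def using assms by (intro INF_lower2[of X]) auto

lemma one_le_gamma_t:
  assumes "(zd_star :: 'a::comm_ring_1 set) \<noteq> {}"
  shows "1 \<le> gamma_t TYPE('a)"
  unfolding gamma_t_def
proof (rule INF_greatest)
  fix X :: "'a set" assume "X \<in> {X. total_dominating X}"
  then have "X \<noteq> {}" using assms by (auto simp: total_dominating_def)
  then show "1 \<le> (if finite X then enat (card X) else \<infinity>)"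
    by (auto simp: one_enat_def card_gt_0_iff Suc_le_eq)
qed

lemma gamma_t_attained:
  assumes "gamma_t TYPE('a::comm_ring_1) \<noteq> \<infinity>"
  obtains X :: "'a::comm_ring_1 set" where
    "total_dominating X" "finite X" "gamma_t TYPE('a) = enat (card X)"
proof -
  define size :: "'a set \<Rightarrow> enat" where "size X = (if finite X then enat (card X) else \<infinity>)" for X
  have gamma: "gamma_t TYPE('a) = Inf (size ` Collect total_dominating)"
    by (simp add: gamma_t_def size_def)
  have "size ` Collect total_dominating \<noteq> {}"
  proof
    assume "size ` Collect total_dominating = {}"
    then have "gamma_t TYPE('a) = \<infinity>" unfolding gamma by (metis Inf_empty top_enat_def)
    with assms show False ..
  qed
  then obtain Y where "Y \<in> size ` Collect total_dominating" by blast
  then have "Inf (size ` Collect total_dominating) \<in> size ` Collect total_dominating"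
    by (rule wellorder_InfI)
  then obtain X where "total_dominating X" "gamma_t TYPE('a) = size X"
    using gamma by auto
  with assms that show ?thesis
    by (auto simp: size_def split: if_splits)
qed

lemma gamma_t_eq_1_iff:
  assumes "(zd_star :: 'a::comm_ring_1 set) \<noteq> {}"
  shows "gamma_t TYPE('a) = 1 \<longleftrightarrow> (\<exists>a :: 'a. total_dominating {a})"
proof
  assume gamma_1: "gamma_t TYPE('a) = 1"
  then have "gamma_t TYPE('a) \<noteq> \<infinity>" by simp
  then obtain X :: "'a set" where "total_dominating X" "gamma_t TYPE('a) = enat (card X)"
    by (rule gamma_t_attained)
  with gamma_1 have "card X = 1" by (simp add: one_enat_def)
  with \<open>total_dominating X\<close> show "\<exists>a :: 'a. total_dominating {a}" by (blast elim: card_1_singletonE)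
next
  assume "\<exists>a :: 'a. total_dominating {a}"
  then obtain a :: 'a where "total_dominating {a}" ..
  then have "gamma_t TYPE('a) \<le> 1" using gamma_t_le_card[of "{a}"] by (simp add: one_enat_def)
  with one_le_gamma_t[OF assms] show "gamma_t TYPE('a) = 1" by simp
qed

theorem theorem3p2:
  assumes not_domain: "\<exists>a b :: 'a::comm_ring_1. a \<noteq> 0 \<and> b \<noteq> 0 \<and> a * b = 0"
  shows "gamma_t TYPE('a) = 1 \<longleftrightarrow> (\<exists>a :: 'a. (zero_divisors :: 'a set) = ann a)"
proof -
  have nonempty: "(zd_star :: 'a set) \<noteq> {}"
    using not_domain by (simp add: zd_star_nonempty_iff)
  show ?thesis
    unfolding gamma_t_eq_1_iff[OF nonempty]
    using zero_divisors_eq_ann_if_total_dominating total_dominating_if_zero_divisors_eq_ann[OF nonempty]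
    by blast
qed

end
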